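(* Let $k\ge1$, $G=(V,E)$ an inductively $k$-independent graph with $k$-independence ordering $v_1,\dots,v_n$, $f:2^V\to\mathbb{R}_{\ge0}$ monotone submodular with $f(\emptyset)=0$, and $\beta>0$. Let $w_1,\dots,w_n$ and $S_{\mathrm{out}}$ be produced by algorithm PD-MON (described in the context). Then $f(S_{\mathrm{out}})\ge\sum_{i=1}^n w_i$.
   Context: $N(v)$ is the neighbourhood of $v$ (excluding $v$); $G$ is inductively $k$-independent with $k$-independence ordering $v_1,\dots,v_n$ if for every $i$, $G[N(v_i)\cap\{v_i,\dots,v_n\}]$ has no independent set of size more than $k$. For $S\subseteq V$, $f_S(v)=f(S\cup\{v\})-f(S)$. Algorithm PD-MON (parameter $\beta>0$). Phase 1: start with $S=\emptyset$ (a stack) and $w_1=\dots=w_n=0$. For $i=1,\dots,n$: let $C_i=N(v_i)\cap S$ for the current $S$; if $f_S(v_i)>(1+\beta)\sum_{v_j\in C_i}w_j$, set $w_i=f_S(v_i)-\sum_{v_j\in C_i}w_j$ (with $S$ the set before insertion) and push $v_i$ onto $S$; otherwise leave $w_i=0$. Let $S_{\mathrm{end}}$ be $S$ at the end of Phase 1. Phase 2: with $S_{\mathrm{out}}=\emptyset$, pop vertices of $S_{\mathrm{end}}$ in reverse insertion order, adding a popped $v$ to $S_{\mathrm{out}}$ whenever $S_{\mathrm{out}}\cup\{v\}$ is independent. Output $S_{\mathrm{out}}$. *)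

theory Defs
  imports Complex_Main
begin

definition nbhd :: "('a \<Rightarrow> 'a \<Rightarrow> bool) \<Rightarrow> 'a set \<Rightarrow> 'a \<Rightarrow> 'a set" where
  "nbhd E V v = {u \<in> V. E v u \<and> u \<noteq> v}"

definition independent :: "('a \<Rightarrow> 'a \<Rightarrow> bool) \<Rightarrow> 'a set \<Rightarrow> bool" where
  "independent E I \<longleftrightarrow> (\<forall>x\<in>I. \<forall>y\<in>I. \<not> E x y)"

definition k_independence_ordering ::
  "('a \<Rightarrow> 'a \<Rightarrow> bool) \<Rightarrow> nat \<Rightarrow> 'a list \<Rightarrow> bool" where
  "k_independence_ordering E k vs \<longleftrightarrow>
     distinct vs \<and>
     (\<forall>i < length vs. \<forall>I. I \<subseteq> nbhd E (set vs) (vs ! i) \<inter> set (drop i vs) \<longrightarrow>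
         independent E I \<longrightarrow> card I \<le> k)"

definition monotone_set_fun :: "'a set \<Rightarrow> ('a set \<Rightarrow> real) \<Rightarrow> bool" where
  "monotone_set_fun V f \<longleftrightarrow> (\<forall>A B. A \<subseteq> B \<longrightarrow> B \<subseteq> V \<longrightarrow> f A \<le> f B)"

definition submodular :: "'a set \<Rightarrow> ('a set \<Rightarrow> real) \<Rightarrow> bool" where
  "submodular V f \<longleftrightarrow>
     (\<forall>A B. A \<subseteq> V \<longrightarrow> B \<subseteq> V \<longrightarrow> f (A \<union> B) + f (A \<inter> B) \<le> f A + f B)"

text \<open>Phase 1 of PD-MON. The stack S is a list with its top at the head; the weights are
  a function on vertices (w v_i = w_i), initially 0.  Processes the remaining vertices in order.\<close>
fun pd_phase1 :: "('a \<Rightarrow> 'a \<Rightarrow> bool) \<Rightarrow> 'a set \<Rightarrow> ('a set \<Rightarrow> real) \<Rightarrow> real \<Rightarrow>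
    'a list \<Rightarrow> 'a list \<Rightarrow> ('a \<Rightarrow> real) \<Rightarrow> 'a list \<times> ('a \<Rightarrow> real)" where
  "pd_phase1 E V f \<beta> [] S w = (S, w)"
| "pd_phase1 E V f \<beta> (v # vs) S w =
     (let C = nbhd E V v \<inter> set S;
          m = f (set S \<union> {v}) - f (set S);
          s = (\<Sum>u\<in>C. w u)
      in if m > (1 + \<beta>) * s
         then pd_phase1 E V f \<beta> vs (v # S) (w(v := m - s))
         else pd_phase1 E V f \<beta> vs S w)"

fun pd_phase2 :: "('a \<Rightarrow> 'a \<Rightarrow> bool) \<Rightarrow> 'a list \<Rightarrow> 'a set \<Rightarrow> 'a set" where
  "pd_phase2 E [] Out = Out"
| "pd_phase2 E (v # S) Out =
     (if independent E (insert v Out) then pd_phase2 E S (insert v Out) else pd_phase2 E S Out)"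

definition pd_mon_weights :: "('a \<Rightarrow> 'a \<Rightarrow> bool) \<Rightarrow> ('a set \<Rightarrow> real) \<Rightarrow> real \<Rightarrow> 'a list \<Rightarrow> ('a \<Rightarrow> real)" where
  "pd_mon_weights E f \<beta> vs = snd (pd_phase1 E (set vs) f \<beta> vs [] (\<lambda>_. 0))"

definition pd_mon_out :: "('a \<Rightarrow> 'a \<Rightarrow> bool) \<Rightarrow> ('a set \<Rightarrow> real) \<Rightarrow> real \<Rightarrow> 'a list \<Rightarrow> 'a set" where
  "pd_mon_out E f \<beta> vs = pd_phase2 E (fst (pd_phase1 E (set vs) f \<beta> vs [] (\<lambda>_. 0))) {}"

end

theory Submission
  imports Defs
begin

text \<open>Phase 1 keeps the invariant that the marginal gain of every stack entry over the part of
  the stack beneath it equals its own weight plus the weights of its neighbours beneath it; the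
  weights are nonnegative because \<open>\<beta> \<ge> 0\<close>, and vertices never pushed keep weight 0.
  Phase 2 rejects a vertex only because of an accepted neighbour higher up in the stack, so the
  accepted vertices together with their lower neighbourhoods cover the stack. By diminishing
  returns, the marginal gain of an accepted vertex over the accepted vertices beneath it is at
  least its marginal gain over the whole stack beneath it. Summing over the accepted vertices,
  \<open>f(S_out)\<close> is at least the weight of \<open>S_out\<close> plus that of its lower neighbourhoods, which
  is at least the total weight.\<close>

text \<open>The head of a stack list is its top, so \<open>below L v\<close> lists the entries pushed before \<open>v\<close>.\<close>

fun below :: "'a list \<Rightarrow> 'a \<Rightarrow> 'a list" where
  "below [] v = []"
| "below (x # xs) v = (if x = v then xs else below xs v)"

fun tight_stack :: "('a \<Rightarrow> 'a \<Rightarrow> bool) \<Rightarrow> 'a set \<Rightarrow> ('a set \<Rightarrow> real) \<Rightarrow> ('a \<Rightarrow> real) \<Rightarrow>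
    'a list \<Rightarrow> bool" where
  "tight_stack E V f w [] \<longleftrightarrow> True"
| "tight_stack E V f w (x # S) \<longleftrightarrow> x \<notin> set S \<and>
     f (insert x (set S)) - f (set S) = w x + (\<Sum>u\<in>nbhd E V x \<inter> set S. w u) \<and>
     tight_stack E V f w S"

lemma tight_stack_cong:
  "tight_stack E V f w S \<Longrightarrow> (\<And>u. u \<in> set S \<Longrightarrow> w u = w' u) \<Longrightarrow> tight_stack E V f w' S"
  by (induction S) auto

lemma sum_Un_le:
  fixes w :: "'a \<Rightarrow> real"
  assumes "finite A" "finite B" "\<And>u. w u \<ge> 0"
  shows "sum w (A \<union> B) \<le> sum w A + sum w B"
  using sum.union_inter[OF assms(1,2), of w] sum_nonneg[of "A \<inter> B" w] assms(3) by simp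

lemma sum_UN_le:
  fixes w :: "'a \<Rightarrow> real"
  assumes "finite I" "\<And>i. i \<in> I \<Longrightarrow> finite (A i)" "\<And>u. w u \<ge> 0"
  shows "sum w (\<Union>i\<in>I. A i) \<le> (\<Sum>i\<in>I. sum w (A i))"
  using assms(1,2)
proof (induction I rule: finite_induct)
  case (insert i I)
  have "sum w (\<Union>j\<in>insert i I. A j) \<le> sum w (A i) + sum w (\<Union>j\<in>I. A j)"
    using sum_Un_le[of "A i" "\<Union>j\<in>I. A j" w] assms(3) insert.prems insert.hyps(1) by simp
  then show ?case using insert by simp
qed simp

context
  fixes E :: "'a \<Rightarrow> 'a \<Rightarrow> bool" and V :: "'a set" and f :: "'a set \<Rightarrow> real" and \<beta> :: real
begin

lemma pd_phase1_Cons_cases: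
  fixes v :: 'a and vs S :: "'a list" and w :: "'a \<Rightarrow> real"
  defines "s \<equiv> (\<Sum>u\<in>nbhd E V v \<inter> set S. w u)" and "m \<equiv> f (insert v (set S)) - f (set S)"
  obtains (push) "(1 + \<beta>) * s < m"
    "pd_phase1 E V f \<beta> (v # vs) S w = pd_phase1 E V f \<beta> vs (v # S) (w(v := m - s))"
  | (skip) "pd_phase1 E V f \<beta> (v # vs) S w = pd_phase1 E V f \<beta> vs S w"
  by (cases "(1 + \<beta>) * s < m") (simp_all add: Let_def s_def m_def)

lemma pd_phase1_stack_grows: "set S \<subseteq> set (fst (pd_phase1 E V f \<beta> vs S w))"
proof (induction vs arbitrary: S w)
  case (Cons v vs)
  show ?case
    using Cons.IH by (cases rule: pd_phase1_Cons_cases[where v=v and vs=vs and S=S and w=w]) force+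
qed simp

lemma pd_phase1_stack_subset: "set (fst (pd_phase1 E V f \<beta> vs S w)) \<subseteq> set vs \<union> set S"
proof (induction vs arbitrary: S w)
  case (Cons v vs)
  show ?case
    using Cons.IH by (cases rule: pd_phase1_Cons_cases[where v=v and vs=vs and S=S and w=w]) force+
qed simp

lemma pd_phase1_weight_outside_stack:
  "u \<notin> set (fst (pd_phase1 E V f \<beta> vs S w)) \<Longrightarrow> snd (pd_phase1 E V f \<beta> vs S w) u = w u"
proof (induction vs arbitrary: S w)
  case (Cons v vs)
  show ?case
  proof (cases rule: pd_phase1_Cons_cases[where v=v and vs=vs and S=S and w=w])
    case push
    then show ?thesis using Cons pd_phase1_stack_grows[of "v # S"] by fastforce
  qed (use Cons in simp)
qed simp

lemma pd_phase1_weights_nonneg: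
  assumes "\<beta> \<ge> 0" "\<And>u. w u \<ge> 0"
  shows "snd (pd_phase1 E V f \<beta> vs S w) u \<ge> 0"
  using assms(2)
proof (induction vs arbitrary: S w)
  case (Cons v vs)
  show ?case
  proof (cases rule: pd_phase1_Cons_cases[where v=v and vs=vs and S=S and w=w])
    case push
    define s where "s = (\<Sum>u\<in>nbhd E V v \<inter> set S. w u)"
    have "0 \<le> \<beta> * s" unfolding s_def using Cons.prems assms(1) by (simp add: sum_nonneg)
    then have "0 \<le> f (insert v (set S)) - f (set S) - s"
      using push(1) by (simp add: s_def algebra_simps)
    then have "\<And>u. 0 \<le> (w(v := f (insert v (set S)) - f (set S) - s)) u"
      using Cons.prems by simp
    then show ?thesis using push(2) Cons.IH by (simp add: s_def)
  next
    case skip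
    then show ?thesis using Cons.IH Cons.prems by simp
  qed
qed simp

lemma pd_phase1_tight_stack:
  assumes "tight_stack E V f w S" "distinct vs" "set vs \<inter> set S = {}"
  shows "tight_stack E V f (snd (pd_phase1 E V f \<beta> vs S w))
           (fst (pd_phase1 E V f \<beta> vs S w))"
  using assms
proof (induction vs arbitrary: S w)
  case (Cons v vs)
  show ?case
  proof (cases rule: pd_phase1_Cons_cases[where v=v and vs=vs and S=S and w=w])
    case push
    define w' where
      "w' = w(v := f (insert v (set S)) - f (set S) - (\<Sum>u\<in>nbhd E V v \<inter> set S. w u))"
    have "v \<notin> set S" using Cons.prems by auto
    then have "tight_stack E V f w' S"
      by (auto simp: w'_def intro: tight_stack_cong[OF Cons.prems(1)])
    moreover have "(\<Sum>u\<in>nbhd E V v \<inter> set S. w' u) = (\<Sum>u\<in>nbhd E V v \<inter> set S. w u)"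
      using \<open>v \<notin> set S\<close> by (auto simp: w'_def intro!: sum.cong)
    ultimately have "tight_stack E V f w' (v # S)" using \<open>v \<notin> set S\<close> by (simp add: w'_def)
    moreover have "distinct vs" "set vs \<inter> set (v # S) = {}" using Cons.prems by auto
    moreover have "pd_phase1 E V f \<beta> (v # vs) S w = pd_phase1 E V f \<beta> vs (v # S) w'"
      using push(2) by (simp add: w'_def)
    ultimately show ?thesis using Cons.IH[of w' "v # S"] by simp
  next
    case skip
    then show ?thesis using Cons.IH[of w S] Cons.prems by simp
  qed
qed simp

lemma pd_phase1_from_empty:
  assumes "pd_phase1 E V f \<beta> vs [] (\<lambda>_. 0) = (L, w)" "distinct vs" "\<beta> \<ge> 0"
  shows "set L \<subseteq> set vs" and "w u \<ge> 0" and "u \<notin> set L \<Longrightarrow> w u = 0"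
    and "tight_stack E V f w L"
proof -
  show "set L \<subseteq> set vs"
    using pd_phase1_stack_subset[of vs "[]" "\<lambda>_. 0"] assms(1) by simp
  show "w u \<ge> 0"
    using pd_phase1_weights_nonneg[OF assms(3), of "\<lambda>_. 0" vs "[]" u] assms(1) by simp
  show "u \<notin> set L \<Longrightarrow> w u = 0"
    using pd_phase1_weight_outside_stack[of u vs "[]" "\<lambda>_. 0"] assms(1) by simp
  show "tight_stack E V f w L"
    using pd_phase1_tight_stack[of "\<lambda>_. 0" "[]" vs] assms(1,2) by simp
qed

end

lemma pd_phase2_mono: "Q \<subseteq> pd_phase2 E L Q"
proof (induction L arbitrary: Q)
  case (Cons x L)
  show ?case using Cons.IH[of Q] Cons.IH[of "insert x Q"] by auto
qed simp

lemma pd_phase2_subset: "pd_phase2 E L Q \<subseteq> Q \<union> set L"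
proof (induction L arbitrary: Q)
  case (Cons x L)
  show ?case using Cons.IH[of Q] Cons.IH[of "insert x Q"] by auto
qed simp

lemma not_independent_insert_neighbour:
  assumes "symp E" "irreflp E" "independent E Q" "\<not> independent E (insert x Q)"
  shows "\<exists>v\<in>Q. E v x"
  using assms unfolding independent_def by (blast dest: sympD irreflpD)

lemma pd_phase2_rejected:
  assumes "symp E" "irreflp E" "independent E Q"
    and "u \<in> set L" "u \<notin> pd_phase2 E L Q"
  shows "\<exists>v\<in>pd_phase2 E L Q. E v u \<and> (v \<in> Q \<or> u \<in> set (below L v))"
  using assms(3-)
proof (induction L arbitrary: Q)
  case (Cons x L)
  define Q' where "Q' = (if independent E (insert x Q) then insert x Q else Q)"
  have out: "pd_phase2 E (x # L) Q = pd_phase2 E L Q'"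
    by (simp add: Q'_def)
  have "independent E Q'" using Cons.prems(1) by (simp add: Q'_def)
  have "u \<notin> pd_phase2 E L Q'" using Cons.prems(3) unfolding out .
  show ?case
  proof (cases "u = x")
    case True
    then have "\<not> independent E (insert x Q)"
      using \<open>u \<notin> pd_phase2 E L Q'\<close> pd_phase2_mono[of "insert x Q" E L] by (auto simp: Q'_def)
    then obtain v where "v \<in> Q" "E v x"
      using not_independent_insert_neighbour[OF assms(1,2) Cons.prems(1)] by blast
    moreover have "v \<in> pd_phase2 E L Q'"
      using \<open>v \<in> Q\<close> pd_phase2_mono[of Q' E L] by (auto simp: Q'_def)
    ultimately show ?thesis unfolding out using True by blast
  next
    case False
    then obtain v where "v \<in> pd_phase2 E L Q'" "E v u" "v \<in> Q' \<or> u \<in> set (below L v)"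
      using Cons.IH[OF \<open>independent E Q'\<close>] Cons.prems(2) \<open>u \<notin> pd_phase2 E L Q'\<close> by auto
    then show ?thesis unfolding out using Cons.prems(2) False by (auto simp: Q'_def split: if_splits)
  qed
qed simp

lemma pd_phase2_covers:
  assumes "symp E" "irreflp E" "set L \<subseteq> V"
  shows "set L \<subseteq> (\<Union>v\<in>pd_phase2 E L {}. insert v (nbhd E V v \<inter> set (below L v)))"
proof
  fix u assume "u \<in> set L"
  show "u \<in> (\<Union>v\<in>pd_phase2 E L {}. insert v (nbhd E V v \<inter> set (below L v)))"
  proof (cases "u \<in> pd_phase2 E L {}")
    case False
    then obtain v where "v \<in> pd_phase2 E L {}" "E v u" "u \<in> set (below L v)"
      using pd_phase2_rejected[OF assms(1,2) _ \<open>u \<in> set L\<close>] by (auto simp: independent_def)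
    moreover have "u \<noteq> v" using False \<open>v \<in> pd_phase2 E L {}\<close> by blast
    ultimately show ?thesis using \<open>u \<in> set L\<close> assms(3) by (auto simp: nbhd_def)
  qed blast
qed

lemma pd_phase2_weight_le_charges:
  fixes w :: "'a \<Rightarrow> real"
  assumes "symp E" "irreflp E" "set L \<subseteq> V" "\<And>u. w u \<ge> 0"
  shows "sum w (set L)
           \<le> (\<Sum>v\<in>pd_phase2 E L {}. w v + (\<Sum>u\<in>nbhd E V v \<inter> set (below L v). w u))"
proof -
  let ?R = "pd_phase2 E L {}"
  have "finite ?R" using pd_phase2_subset[of E L "{}"] finite_subset by auto
  then have "finite (\<Union>v\<in>?R. insert v (nbhd E V v \<inter> set (below L v)))" by auto
  then have "sum w (set L) \<le> sum w (\<Union>v\<in>?R. insert v (nbhd E V v \<inter> set (below L v)))"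
    using pd_phase2_covers[OF assms(1-3)] by (rule sum_mono2) (rule assms(4))
  also have "\<dots> \<le> (\<Sum>v\<in>?R. sum w (insert v (nbhd E V v \<inter> set (below L v))))"
    using sum_UN_le[where w=w, OF \<open>finite ?R\<close> _ assms(4)] by simp
  also have "\<dots> = (\<Sum>v\<in>?R. w v + (\<Sum>u\<in>nbhd E V v \<inter> set (below L v). w u))"
    by (intro sum.cong) (auto simp: nbhd_def)
  finally show ?thesis .
qed

lemma submodular_diminishing_returns:
  assumes "submodular V f" "A \<subseteq> B" "B \<subseteq> V" "x \<in> V" "x \<notin> B"
  shows "f (insert x B) - f B \<le> f (insert x A) - f A"
proof -
  have "insert x A \<subseteq> V" using assms(2-4) by auto
  then have "f (insert x A \<union> B) + f (insert x A \<inter> B) \<le> f (insert x A) + f B"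
    using assms(1,3) unfolding submodular_def by blast
  moreover have "insert x A \<union> B = insert x B" "insert x A \<inter> B = A" using assms(2,5) by auto
  ultimately show ?thesis by simp
qed

lemma tight_stack_value_ge:
  assumes "submodular V f" "f {} = 0"
    and "tight_stack E V f w L" "set L \<subseteq> V" "R \<subseteq> set L"
  shows "(\<Sum>v\<in>R. w v + (\<Sum>u\<in>nbhd E V v \<inter> set (below L v). w u)) \<le> f R"
  using assms(3-)
proof (induction L arbitrary: R)
  case Nil
  then show ?case using assms(2) by simp
next
  case (Cons x L)
  define R' where "R' = R - {x}"
  have "R' \<subseteq> set L" using Cons.prems(3) by (auto simp: R'_def)
  have "finite R'" using \<open>R' \<subseteq> set L\<close> finite_subset by blast
  have "(\<Sum>v\<in>R'. w v + (\<Sum>u\<in>nbhd E V v \<inter> set (below (x # L) v). w u))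
      = (\<Sum>v\<in>R'. w v + (\<Sum>u\<in>nbhd E V v \<inter> set (below L v). w u))"
    by (intro sum.cong) (auto simp: R'_def)
  also have "\<dots> \<le> f R'"
    using Cons.IH[OF _ _ \<open>R' \<subseteq> set L\<close>] Cons.prems by simp
  finally have IH: "(\<Sum>v\<in>R'. w v + (\<Sum>u\<in>nbhd E V v \<inter> set (below (x # L) v). w u)) \<le> f R'" .
  show ?case
  proof (cases "x \<in> R")
    case False
    then show ?thesis using IH by (simp add: R'_def)
  next
    case True
    then have "R = insert x R'" "x \<notin> R'" by (auto simp: R'_def)
    have "w x + (\<Sum>u\<in>nbhd E V x \<inter> set L. w u) = f (insert x (set L)) - f (set L)"
      using Cons.prems(1) by simp
    also have "\<dots> \<le> f (insert x R') - f R'"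
      using Cons.prems by (intro submodular_diminishing_returns[OF assms(1) \<open>R' \<subseteq> set L\<close>]) auto
    finally show ?thesis
      using IH \<open>finite R'\<close> \<open>x \<notin> R'\<close> by (simp add: \<open>R = insert x R'\<close>)
  qed
qed

theorem lemma3:
  fixes E :: "'a \<Rightarrow> 'a \<Rightarrow> bool" and vs :: "'a list" and k :: nat
    and f :: "'a set \<Rightarrow> real" and \<beta> :: real
  assumes "k \<ge> 1"
    and "\<forall>u v. E u v \<longrightarrow> E v u"
    and "\<forall>v. \<not> E v v"
    and "k_independence_ordering E k vs"
    and "\<forall>A. A \<subseteq> set vs \<longrightarrow> f A \<ge> 0"
    and "monotone_set_fun (set vs) f"
    and "submodular (set vs) f"
    and "f {} = 0"
    and "\<beta> > 0"
  shows "f (pd_mon_out E f \<beta> vs) \<ge> (\<Sum>i<length vs. pd_mon_weights E f \<beta> vs (vs ! i))"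
proof -
  obtain L w where phase1: "pd_phase1 E (set vs) f \<beta> vs [] (\<lambda>_. 0) = (L, w)"
    by fastforce
  have "distinct vs" using assms(4) by (simp add: k_independence_ordering_def)
  note L = pd_phase1_from_empty[OF phase1 \<open>distinct vs\<close> less_imp_le[OF assms(9)]]
  have "(\<Sum>i<length vs. w (vs ! i)) = sum w (set vs)"
    using sum.reindex_bij_betw[OF bij_betw_nth[OF \<open>distinct vs\<close> refl refl], of w] by simp
  also have "\<dots> = sum w (set L)"
    using L(1,3) by (intro sum.mono_neutral_right) auto
  also have "\<dots> \<le> (\<Sum>v\<in>pd_phase2 E L {}. w v + (\<Sum>u\<in>nbhd E (set vs) v \<inter> set (below L v). w u))"
    using assms(2,3) L(1,2) by (intro pd_phase2_weight_le_charges sympI irreflpI) auto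
  also have "\<dots> \<le> f (pd_phase2 E L {})"
    using tight_stack_value_ge[OF assms(7,8) L(4,1)] pd_phase2_subset[of E L "{}"] by simp
  finally show ?thesis
    using phase1 by (simp add: pd_mon_weights_def pd_mon_out_def)
qed

end
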